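(* The coefficient matrix $\mathbf Z_\mathrm{p} = \mathbf M\, \mathbf Q\, \hat{\mathbf Z}\, \mathbf Q\, \mathbf G\, \mathbf P\, \mathbf G^\mathrm{T}\, \mathbf Q\, \hat{\mathbf Z}\, \mathbf Q\, \mathbf M$ of the proposed preconditioned formulation is symmetric, positive-definite.
   Context: Setting: BEM (Galerkin) discretization of the symmetric formulation of the EEG forward problem on $N$ nested, smooth, triangulated surfaces $\Gamma_1,\dots,\Gamma_N$ (piecewise-homogeneous conductivities $\sigma_i$, exterior conductivity zero), with piecewise-linear pyramid functions $\lambda$ on vertices and piecewise-constant patch functions $\pi$ on cells. $\mathbf Z=\begin{pmatrix}\mathbf N & \mathbf D^*\\ \mathbf D & \mathbf S\end{pmatrix}$ is the (symmetric) system matrix of the symmetric formulation (hypersingular, adjoint double-layer, double-layer, single-layer blocks with conductivity-dependent coefficients; last block row/column removed). $\hat{\mathbf Z}=\mathbf Z+\boldsymbol\zeta\boldsymbol\zeta^\mathrm{T}$ is its deflated, invertible version, where $\boldsymbol\zeta$ is zero except for the block $\mathbf G_{N,\lambda\lambda}^\mathrm{T}\mathbf 1$ corresponding to the potential on $\Gamma_N$. $\mathbf Q$ is a diagonal matrix with positive entries $q_{V,i}\sqrt{R_i}$ on the potential unknowns of $\Gamma_i$ and $q_{C,i}/\sqrt{R_i}$ on the current unknowns, with $q_{V,i}=\max(\sigma_i,\sigma_{i+1})^{-1/2}$, $q_{C,i}=\min(\sigma_i,\sigma_{i+1})^{1/2}$ and $R_i>0$ a characteristic size of $\Gamma_i$.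 $\mathbf P$ is block-diagonal with blocks $R_i^{-2}\hat{\mathbf\Delta}_i^{-1}$ ($i=1,\dots,N$) and $R_i^{2}\hat{\tilde{\mathbf\Delta}}_i$ ($i=1,\dots,N-1$), where $\hat{\mathbf\Delta}_i=\mathbf\Delta_i+\mathbf G_{i,\lambda\lambda}^\mathrm{T}\mathbf 1\mathbf 1^\mathrm{T}\mathbf G_{i,\lambda\lambda}$ and $\hat{\tilde{\mathbf\Delta}}_i=\tilde{\mathbf\Delta}_i+\mathbf G_{i,\tilde\lambda\tilde\lambda}^\mathrm{T}\mathbf 1\mathbf 1^\mathrm{T}\mathbf G_{i,\tilde\lambda\tilde\lambda}$ are the (symmetric positive-definite) deflated Laplace–Beltrami stiffness matrices discretized with primal pyramid functions and with dual pyramid functions (on the barycentric dual mesh), respectively; $\mathbf G_{i,fg}$ denotes Gram matrices $(f_{i,m},g_{i,n})_{L^2(\Gamma_i)}$. $\mathbf G$ is block-diagonal with identity blocks on the potential unknowns and blocks $\mathbf G_{i,\tilde\lambda\pi}^{-1}$ on the current unknowns. $\mathbf M$ is block-diagonal with blocks $\mathbf G_{i,\lambda\lambda}^{-1/2}$ and $\mathbf G_{i,\pi\pi}^{-1/2}$. *)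

theory Defs
  imports "HOL-Analysis.Analysis"
begin

text \<open>Unknowns are indexed by 'v + 'c: Inl = potential unknowns (pyramid coefficients
on all surfaces), Inr = current unknowns (patch coefficients on surfaces 1..N-1).\<close>

definition symmetric_mat :: "real^'n^'n \<Rightarrow> bool" where
  "symmetric_mat A \<longleftrightarrow> transpose A = A"

definition pos_def_mat :: "real^'n^'n \<Rightarrow> bool" where
  "pos_def_mat A \<longleftrightarrow> symmetric_mat A \<and> (\<forall>x. x \<noteq> 0 \<longrightarrow> x \<bullet> (A *v x) > 0)"

definition outer :: "real^'n \<Rightarrow> real^'n \<Rightarrow> real^'n^'n" where
  "outer u w = (\<chi> i j. u $ i * w $ j)"

definition diag_pos_mat :: "real^'n^'n \<Rightarrow> bool" where
  "diag_pos_mat Q \<longleftrightarrow> (\<forall>i j. i \<noteq> j \<longrightarrow> Q $ i $ j = 0) \<and> (\<forall>i. Q $ i $ i > 0)"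

text \<open>G = diag(I, B) with B invertible (B = inverse of the dual-primal Gram blocks).\<close>
definition G_structure :: "real^('v::finite + 'c::finite)^('v + 'c) \<Rightarrow> bool" where
  "G_structure G \<longleftrightarrow>
     (\<forall>i j. G $ Inl i $ Inl j = (if i = j then 1 else 0)) \<and>
     (\<forall>i j. G $ Inl i $ Inr j = 0) \<and>
     (\<forall>i j. G $ Inr i $ Inl j = 0) \<and>
     invertible (\<chi> i j. G $ Inr i $ Inr j :: real^'c^'c)"

end

theory Submission
  imports Defs
begin

text \<open>With \<open>B = G\<^sup>T Q \<hat>Z Q M\<close>, the symmetry of \<open>M\<close>, \<open>Q\<close> and \<open>\<hat>Z\<close> turns the coefficient
  matrix into the congruence transform \<open>B\<^sup>T P B\<close> of the positive-definite \<open>P\<close>.  Every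
  factor of \<open>B\<close> is invertible (\<open>G\<close> is block-diagonal with an identity block and an
  invertible block), so \<open>B\<close> has trivial kernel and \<open>x\<^sup>T B\<^sup>T P B x = (Bx)\<^sup>T P (Bx) > 0\<close>
  for \<open>x \<noteq> 0\<close>.\<close>

lemma invertible_iff_trivial_kernel:
  fixes A :: "'a::field^'n^'n"
  shows "invertible A \<longleftrightarrow> (\<forall>x. A *v x = 0 \<longrightarrow> x = 0)"
  by (simp add: invertible_left_inverse matrix_left_invertible_ker)

lemma pos_def_mat_transpose: "pos_def_mat A \<Longrightarrow> transpose A = A"
  by (simp add: pos_def_mat_def symmetric_mat_def)

lemma pos_def_mat_invertible:
  fixes A :: "real^'n^'n"
  assumes "pos_def_mat A"
  shows "invertible A"
  unfolding invertible_iff_trivial_kernel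
  using assms unfolding pos_def_mat_def by force

lemma pos_def_mat_congruence:
  fixes P :: "real^'m^'m" and B :: "real^'n^'m"
  assumes P: "pos_def_mat P" and ker_B: "\<And>x. B *v x = 0 \<Longrightarrow> x = 0"
  shows "pos_def_mat (transpose B ** P ** B)"
  unfolding pos_def_mat_def symmetric_mat_def
proof (intro conjI allI impI)
  show "transpose (transpose B ** P ** B) = transpose B ** P ** B"
    by (simp add: matrix_transpose_mul matrix_mul_assoc pos_def_mat_transpose[OF P])
next
  fix x :: "real^'n"
  assume "x \<noteq> 0"
  then have "B *v x \<noteq> 0" using ker_B by blast
  then have pos: "(B *v x) \<bullet> (P *v (B *v x)) > 0" using P unfolding pos_def_mat_def by blast
  have "x \<bullet> ((transpose B ** P ** B) *v x) = x \<bullet> (transpose B *v (P *v (B *v x)))"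
    by (simp only: matrix_vector_mul_assoc matrix_mul_assoc)
  also have "\<dots> = (B *v x) \<bullet> (P *v (B *v x))"
    by (simp only: dot_lmul_matrix[symmetric] vector_transpose_matrix)
  finally show "x \<bullet> ((transpose B ** P ** B) *v x) > 0" using pos by simp
qed

lemma symmetric_mat_add_outer_self:
  assumes "symmetric_mat Z"
  shows "symmetric_mat (Z + outer u u)"
  using assms unfolding symmetric_mat_def outer_def transpose_def
  by (simp add: vec_eq_iff mult.commute)

lemma diag_pos_mat_mult_vec:
  assumes "diag_pos_mat Q"
  shows "(Q *v x) $ i = Q $ i $ i * x $ i"
proof -
  have "(Q *v x) $ i = (\<Sum>j\<in>UNIV. Q $ i $ j * x $ j)"
    by (simp add: matrix_vector_mult_def)
  also have "\<dots> = (\<Sum>j\<in>UNIV. if j = i then Q $ i $ i * x $ i else 0)"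
    by (rule sum.cong) (use assms in \<open>auto simp: diag_pos_mat_def\<close>)
  finally show ?thesis by simp
qed

lemma diag_pos_mat_invertible:
  fixes Q :: "real^'n^'n"
  assumes "diag_pos_mat Q"
  shows "invertible Q"
  unfolding invertible_iff_trivial_kernel
proof (intro allI impI)
  fix x :: "real^'n"
  assume "Q *v x = 0"
  then have "Q $ i $ i * x $ i = 0" for i
    by (metis diag_pos_mat_mult_vec[OF assms] zero_index)
  moreover have "Q $ i $ i \<noteq> 0" for i
    using assms unfolding diag_pos_mat_def by (metis less_irrefl)
  ultimately show "x = 0" by (simp add: vec_eq_iff)
qed

lemma diag_pos_mat_transpose:
  assumes "diag_pos_mat Q"
  shows "transpose Q = Q"
  using assms unfolding diag_pos_mat_def transpose_def
  by (simp add: vec_eq_iff) metis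

lemma G_structure_mult_vec:
  fixes G :: "real^('v::finite + 'c::finite)^('v + 'c)"
  assumes "G_structure G"
  shows "(G *v x) $ Inl i = x $ Inl i"
    and "(G *v x) $ Inr k = ((\<chi> i j. G $ Inr i $ Inr j) *v (\<chi> j. x $ Inr j)) $ k"
proof -
  have identity_block: "G $ Inl i $ Inl j = (if i = j then 1 else 0)"
    and zero_blocks: "G $ Inl i $ Inr k = 0" "G $ Inr k $ Inl j = 0" for i j k
    using assms unfolding G_structure_def by blast+
  show "(G *v x) $ Inl i = x $ Inl i"
    and "(G *v x) $ Inr k = ((\<chi> i j. G $ Inr i $ Inr j) *v (\<chi> j. x $ Inr j)) $ k"
    by (simp_all add: sum.Plus[of UNIV UNIV, simplified] matrix_vector_mult_def identity_block
        zero_blocks if_distrib[of "\<lambda>c. c * _"] cong: if_cong)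
qed

lemma G_structure_invertible:
  fixes G :: "real^('v::finite + 'c::finite)^('v + 'c)"
  assumes G: "G_structure G"
  shows "invertible G"
  unfolding invertible_iff_trivial_kernel
proof (intro allI impI)
  fix x
  assume Gx: "G *v x = 0"
  then have potential: "x $ Inl i = 0" for i
    by (metis G_structure_mult_vec(1)[OF G] zero_index)
  have "invertible (\<chi> i j. G $ Inr i $ Inr j :: real^'c^'c)"
    using G unfolding G_structure_def by blast
  moreover have "(\<chi> i j. G $ Inr i $ Inr j) *v (\<chi> j. x $ Inr j) = 0"
    using Gx by (simp add: vec_eq_iff G_structure_mult_vec(2)[OF G, symmetric])
  ultimately have "(\<chi> j. x $ Inr j) = 0"
    unfolding invertible_iff_trivial_kernel by blast
  then have current: "x $ Inr j = 0" for j
    by (metis vec_lambda_beta zero_index)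
  show "x = 0"
    unfolding vec_eq_iff by (metis potential current zero_index sum.exhaust)
qed

theorem proposition1:
  fixes Z P M Q G :: "real^('v::finite + 'c::finite)^('v + 'c)"
    and \<zeta> :: "real^('v + 'c)"
  assumes Z_sym: "symmetric_mat Z"
    and \<zeta>_supp: "\<forall>j. \<zeta> $ Inr j = 0"
    and Zhat_inv: "invertible (Z + outer \<zeta> \<zeta>)"
    and Q_diag: "diag_pos_mat Q"
    and G_str: "G_structure G"
    and P_pd: "pos_def_mat P"
    and M_pd: "pos_def_mat M"
  shows "pos_def_mat (M ** Q ** (Z + outer \<zeta> \<zeta>) ** Q ** G ** P ** transpose G
                       ** Q ** (Z + outer \<zeta> \<zeta>) ** Q ** M)"
proof -
  \<comment> \<open>The support of \<open>\<zeta>\<close> is irrelevant here: the invertibility of \<open>\<hat>Z\<close> is assumed directly.\<close>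
  define B where "B = transpose G ** Q ** (Z + outer \<zeta> \<zeta>) ** Q ** M"
  have "invertible B"
    unfolding B_def
    by (intro invertible_mult transpose_invertible G_structure_invertible diag_pos_mat_invertible
        pos_def_mat_invertible G_str Q_diag M_pd Zhat_inv)
  then have "pos_def_mat (transpose B ** P ** B)"
    by (intro pos_def_mat_congruence P_pd) (simp add: invertible_iff_trivial_kernel)
  moreover have "transpose B = M ** Q ** (Z + outer \<zeta> \<zeta>) ** Q ** G"
    using symmetric_mat_add_outer_self[OF Z_sym, of \<zeta>]
    by (simp add: B_def matrix_transpose_mul matrix_mul_assoc symmetric_mat_def
        diag_pos_mat_transpose[OF Q_diag] pos_def_mat_transpose[OF M_pd])
  ultimately show ?thesis
    by (simp add: B_def matrix_mul_assoc)
qed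

end
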